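(* Let $\phi$ be a (Lie group) endomorphism of $G$, and define maps $\alpha:\mathbb R^n\to\mathbb R^n$, $\beta:\mathbb R^m\to\mathbb R^n$, $\gamma:\mathbb R^n\to\mathbb R^m$, $\delta:\mathbb R^m\to\mathbb R^m$ by $$\phi(x,0)=(\alpha(x),\gamma(x)),\qquad \phi(0,t)=(\beta(t),\delta(t)),$$ i.e. $\alpha=\pi_{\mathbb R^n}\circ\phi\circ j_{\mathbb R^n}$, $\beta=\pi_{\mathbb R^n}\circ\phi\circ j_{\mathbb R^m}$, $\gamma=\pi_{\mathbb R^m}\circ\phi\circ j_{\mathbb R^n}$, $\delta=\pi_{\mathbb R^m}\circ\phi\circ j_{\mathbb R^m}$, where $\pi$ and $j$ denote the projections onto and injections from the indicated factors of $\mathbb R^n\times\mathbb R^m$. Then $\phi$ is an automorphism of $G$ if and only if the following conditions hold: 1) $\alpha$ is the linear map with matrix $P_\tau\,\mathrm{diag}(c_1,\dots,c_n)$ for some nonzero real numbers $c_1,\dots,c_n$ and some permutation $\tau\in S_n$; 2) $\gamma=0$; 3) $\delta$ is the linear map with matrix $\left({}^t\Omega\,\Omega\right)^{-1}{}^t\Omega\,P_\tau\,\Omega$ (with the same $\tau$); 4) $\beta(t)=\sum_{k=0}^{\infty}\frac{(\delta(t)\cdot\Delta)^k}{(k+1)!}\,U t$ for all $t\in\mathbb R^m$, for some $U\in\mathbb R^{n\times m}$.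
   Context: Fix integers $1\le m\le n$. Let $\Delta_1,\dots,\Delta_m\in\mathbb R^{n\times n}$ be linearly independent, nonsingular, traceless diagonal matrices $\Delta_i=\mathrm{diag}(d_1^{(i)},\dots,d_n^{(i)})$ such that for each $i$, $d_k^{(i)}\neq d_j^{(i)}$ whenever $k\neq j$. For $t=(t_1,\dots,t_m)^T\in\mathbb R^m$ write $t\cdot\Delta=\sum_{i=1}^m t_i\Delta_i$ and $\eta(t)=e^{t\cdot\Delta}$. Let $G=\mathbb R^n\rtimes_\eta\mathbb R^m$ be the Lie group with underlying set $\mathbb R^n\times\mathbb R^m$ and multiplication $(x,t)(y,s)=(x+e^{t\cdot\Delta}y,\ t+s)$. Let $\Omega\in\mathbb R^{n\times m}$ be the matrix with entries $\Omega_{ij}=d_i^{(j)}$ (it is injective, so ${}^t\Omega\Omega$ is invertible). For $\tau\in S_n$ (permutations of $\{1,\dots,n\}$), $P_\tau$ denotes the permutation matrix obtained from $I_n$ by replacing, for each $1\le i\le n$, the $i$-th row by the $\tau^{-1}(i)$-th row. *)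

theory Defs
  imports "HOL-Analysis.Analysis"
begin

primrec matpow :: "real^'n^'n \<Rightarrow> nat \<Rightarrow> real^'n^'n" where
  "matpow A 0 = mat 1"
| "matpow A (Suc k) = A ** matpow A k"

definition mexp :: "real^'n^'n \<Rightarrow> real^'n^'n" where
  "mexp A = (\<Sum>k. (1 / fact k) *\<^sub>R matpow A k)"

definition diag_mat :: "('n \<Rightarrow> real) \<Rightarrow> real^'n^'n" where
  "diag_mat c = (\<chi> i j. if i = j then c i else 0)"

text \<open>Delta d i = diag(d_1^(i),...,d_n^(i)); d i k is d_k^(i).\<close>
definition Delta :: "('m \<Rightarrow> 'n \<Rightarrow> real) \<Rightarrow> 'm \<Rightarrow> real^'n^'n" where
  "Delta d i = diag_mat (d i)"

definition tDelta :: "('m \<Rightarrow> 'n \<Rightarrow> real) \<Rightarrow> real^'m \<Rightarrow> real^'n^'n" where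
  "tDelta d t = (\<Sum>i\<in>UNIV. (t $ i) *\<^sub>R Delta d i)"

definition Omega :: "('m::finite \<Rightarrow> 'n::finite \<Rightarrow> real) \<Rightarrow> real^'m^'n" where
  "Omega d = (\<chi> k i. d i k)"

definition Pmat :: "('n \<Rightarrow> 'n) \<Rightarrow> real^'n^'n" where
  "Pmat \<tau> = (\<chi> i j. if j = inv \<tau> i then 1 else 0)"

definition gmul :: "('m::finite \<Rightarrow> 'n::finite \<Rightarrow> real) \<Rightarrow> (real^'n) \<times> (real^'m) \<Rightarrow> (real^'n) \<times> (real^'m) \<Rightarrow> (real^'n) \<times> (real^'m)" where
  "gmul d g h = (fst g + mexp (tDelta d (snd g)) *v fst h, snd g + snd h)"

text \<open>Smoothness (C^infinity) on a finite-dimensional space: every iterated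
  directional derivative exists as a Frechet derivative everywhere.\<close>
fun iter_dd :: "'a::real_normed_vector list \<Rightarrow> ('a \<Rightarrow> 'b::real_normed_vector) \<Rightarrow> 'a \<Rightarrow> 'b" where
  "iter_dd [] f = f"
| "iter_dd (v # vs) f = (\<lambda>x. frechet_derivative (iter_dd vs f) (at x) v)"

definition smooth :: "('a::real_normed_vector \<Rightarrow> 'b::real_normed_vector) \<Rightarrow> bool" where
  "smooth f \<longleftrightarrow> (\<forall>vs x. iter_dd vs f differentiable (at x))"

definition lie_endo :: "('m::finite \<Rightarrow> 'n::finite \<Rightarrow> real) \<Rightarrow> ((real^'n) \<times> (real^'m) \<Rightarrow> (real^'n) \<times> (real^'m)) \<Rightarrow> bool" where
  "lie_endo d \<phi> \<longleftrightarrow> smooth \<phi> \<and> (\<forall>g h. \<phi> (gmul d g h) = gmul d (\<phi> g) (\<phi> h))"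

definition lie_auto :: "('m::finite \<Rightarrow> 'n::finite \<Rightarrow> real) \<Rightarrow> ((real^'n) \<times> (real^'m) \<Rightarrow> (real^'n) \<times> (real^'m)) \<Rightarrow> bool" where
  "lie_auto d \<phi> \<longleftrightarrow> lie_endo d \<phi> \<and> bij \<phi> \<and> lie_endo d (inv \<phi>)"

end

(*
  Write phi(x, t) = (alpha x + beta t, delta t); the second component of phi(x, 0) vanishes because
  (x, 0) is a commutator of (0, t) and (y, 0) while snd o phi is a homomorphism into the abelian
  group R^m.  The group law turns into the intertwining relation
  alpha (e^(t.Delta) x) = e^(delta(t).Delta) (alpha x) and the cocycle identity
  beta (t + s) = beta t + e^(delta(t).Delta) (beta s).

  If phi is an automorphism, alpha is additive, continuous and injective, hence an injective linear
  map intertwining two diagonal matrices; since the first one has distinct eigenvalues, alpha is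
  monomial, P_tau diag(c).  Comparing eigenvalues gives Omega (delta t) = P_tau (Omega t), which
  determines delta through the left inverse (Omega^T Omega)^-1 Omega^T of the injective matrix
  Omega.  The symmetry of the cocycle identity forces beta(t)_k = c_k (exp((Omega delta(t))_k) - 1),
  which is the series formula with (e^z - 1)/z = sum z^k/(k+1)!.

  Conversely, under 1) and 3) the matrices A = P_tau diag(c) and delta are invertible, and
  (x, t) |-> (A^-1 (x - beta(delta^-1 t)), delta^-1 t) is a smooth homomorphic inverse of phi.
*)
theory Submission
  imports Defs
begin

section \<open>Diagonal matrices\<close>

lemma if_zero_mult: "(if P then a else 0) * b = (if P then a * b else (0::'a::mult_zero))"
  by simp

lemma mult_if_zero: "b * (if P then a else 0) = (if P then b * a else (0::'a::mult_zero))"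
  by simp

lemma diag_mat_mult: "diag_mat a ** diag_mat b = diag_mat (\<lambda>i. a i * b i)"
  by (simp add: diag_mat_def matrix_matrix_mult_def vec_eq_iff if_zero_mult mult_if_zero)

lemma matrix_vector_mult_diag_mat: "diag_mat a *v x = (\<chi> i. a i * x $ i)"
  by (simp add: diag_mat_def matrix_vector_mult_def vec_eq_iff if_zero_mult mult_if_zero)

lemma scaleR_diag_mat: "r *\<^sub>R diag_mat a = diag_mat (\<lambda>i. r * a i)"
  by (simp add: diag_mat_def vec_eq_iff)

lemma diag_mat_1: "diag_mat (\<lambda>i. 1) = mat 1"
  unfolding diag_mat_def mat_def by simp

lemma matpow_diag_mat: "matpow (diag_mat a) k = diag_mat (\<lambda>i. a i ^ k)"
  by (induction k) (simp_all add: diag_mat_1 diag_mat_mult)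

lemma sums_diag_mat:
  assumes "\<And>i. (\<lambda>k. g k i) sums S i"
  shows "(\<lambda>k. diag_mat (g k)) sums diag_mat S"
proof -
  have "(\<lambda>n. \<Sum>k<n. diag_mat (g k)) = (\<lambda>n. \<chi> i j. if i = j then \<Sum>k<n. g k i else 0)"
    by (auto simp: diag_mat_def vec_eq_iff)
  then show ?thesis
    using assms unfolding sums_def diag_mat_def by (auto intro!: tendsto_intros)
qed

lemma mexp_diag_mat: "mexp (diag_mat a) = diag_mat (\<lambda>i. exp (a i))"
proof -
  have "(\<lambda>k. 1 / fact k * x ^ k) sums exp x" for x :: real
    using exp_converges[of x] by (simp add: field_simps)
  then have "(\<lambda>k. (1 / fact k) *\<^sub>R matpow (diag_mat a) k) sums diag_mat (\<lambda>i. exp (a i))"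
    unfolding matpow_diag_mat scaleR_diag_mat by (intro sums_diag_mat)
  then show ?thesis
    unfolding mexp_def by (rule sums_unique[symmetric])
qed

definition exprel :: "real \<Rightarrow> real" where
  "exprel z = (if z = 0 then 1 else (exp z - 1) / z)"

lemma exprel_sums: "(\<lambda>k. 1 / fact (k + 1) * z ^ k) sums exprel z"
proof (cases "z = 0")
  case True
  have "(\<lambda>k. 1 / fact (k + 1) * z ^ k) sums (1 / fact (0 + 1))"
    unfolding True by (rule powser_sums_zero)
  then show ?thesis by (simp add: True exprel_def)
next
  case False
  have "(\<lambda>k. z ^ Suc k /\<^sub>R fact (Suc k)) sums (exp z - 1)"
    using sums_Suc_iff[of "\<lambda>k. z ^ k /\<^sub>R fact k"] exp_converges[of z] by simp
  then have "(\<lambda>k. z ^ Suc k /\<^sub>R fact (Suc k) / z) sums ((exp z - 1) / z)"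
    by (rule sums_divide)
  then show ?thesis
    using False by (simp add: exprel_def field_simps del: fact_Suc)
qed

lemma mult_exprel: "z * exprel z = exp z - 1"
  by (simp add: exprel_def)

section \<open>Invertible and monomial matrices\<close>

lemma invertible_iff_inj:
  fixes A :: "'a::field^'n^'n"
  shows "invertible A \<longleftrightarrow> inj ((*v) A)"
  by (simp add: invertible_left_inverse matrix_left_invertible_injective)

lemma matrix_inv_mult:
  fixes A :: "'a::semiring_1^'n^'m"
  assumes "invertible A"
  shows matrix_inv_right: "A ** matrix_inv A = mat 1" and matrix_inv_left: "matrix_inv A ** A = mat 1"
  using someI_ex[OF assms[unfolded invertible_def]] unfolding matrix_inv_def by auto

lemma gram_matrix_left_inverse:
  fixes A :: "real^'m^'n"
  assumes inj: "inj ((*v) A)"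
  shows "matrix_inv (transpose A ** A) ** transpose A ** A = mat 1"
proof -
  have "x = 0" if "transpose A ** A *v x = 0" for x
  proof -
    have "inner (A *v x) (A *v x) = inner ((A *v x) v* A) x"
      by (simp add: dot_lmul_matrix)
    also have "(A *v x) v* A = transpose A ** A *v x"
      by (simp add: matrix_vector_mul_assoc[symmetric])
    finally have "A *v x = 0"
      using that by simp
    then show "x = 0"
      using inj by (metis injD matrix_vector_mult_0_right)
  qed
  then have "invertible (transpose A ** A)"
    by (simp add: invertible_left_inverse matrix_left_invertible_ker)
  then show ?thesis
    by (simp add: matrix_inv_left matrix_mul_assoc[symmetric])
qed

lemma Pmat_mult_vec_nth: "(Pmat \<tau> *v x) $ i = x $ inv \<tau> i"
  by (simp add: Pmat_def matrix_vector_mult_def if_zero_mult mult_if_zero)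

lemma monomial_mult_vec_nth: "((Pmat \<tau> ** diag_mat c) *v x) $ i = c (inv \<tau> i) * x $ inv \<tau> i"
  by (simp add: matrix_vector_mul_assoc[symmetric] Pmat_mult_vec_nth matrix_vector_mult_diag_mat)

lemma monomial_entry: "(Pmat \<tau> ** diag_mat c) $ i $ j = (if j = inv \<tau> i then c j else 0)"
  by (simp add: Pmat_def diag_mat_def matrix_matrix_mult_def if_zero_mult mult_if_zero)

lemma inj_monomial:
  assumes \<tau>: "\<tau> permutes UNIV" and c: "\<forall>k. c k \<noteq> 0"
  shows "inj ((*v) (Pmat \<tau> ** diag_mat c))"
proof (rule injI)
  fix x y
  assume "(Pmat \<tau> ** diag_mat c) *v x = (Pmat \<tau> ** diag_mat c) *v y"
  then have "((Pmat \<tau> ** diag_mat c) *v x) $ \<tau> k = ((Pmat \<tau> ** diag_mat c) *v y) $ \<tau> k" for k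
    by simp
  then show "x = y"
    using c by (simp add: vec_eq_iff monomial_mult_vec_nth permutes_inverses[OF \<tau>])
qed

lemma inj_Pmat:
  assumes \<tau>: "\<tau> permutes UNIV"
  shows "inj ((*v) (Pmat \<tau>))"
proof (rule injI)
  fix x y
  assume "Pmat \<tau> *v x = Pmat \<tau> *v y"
  then have "(Pmat \<tau> *v x) $ \<tau> k = (Pmat \<tau> *v y) $ \<tau> k" for k
    by simp
  then show "x = y"
    by (simp add: vec_eq_iff Pmat_mult_vec_nth permutes_inverses[OF \<tau>])
qed

lemma linear_intertwining_diag_monomial:
  fixes f :: "real^'n \<Rightarrow> real^'n"
  assumes lin: "linear f" and inj: "inj f" and a: "inj a"
    and intertwining: "\<And>x. f (diag_mat a *v x) = diag_mat b *v f x"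
  obtains \<tau> c where "\<tau> permutes UNIV" "\<forall>k. c k \<noteq> 0" "\<And>x. f x = (Pmat \<tau> ** diag_mat c) *v x"
proof -
  \<comment> \<open>Column \<open>k\<close> of \<open>f\<close> is an eigenvector of \<open>diag_mat b\<close> for the eigenvalue \<open>a k\<close>; as the
    \<open>a k\<close> are distinct, the columns have disjoint supports.\<close>
  define e where "e k = f (axis k 1)" for k
  have eigen: "a k * e k $ j = b j * e k $ j" for k j
  proof -
    have "diag_mat a *v axis k 1 = a k *\<^sub>R axis k 1"
      by (simp add: matrix_vector_mult_diag_mat vec_eq_iff axis_def)
    then have "a k *\<^sub>R e k = diag_mat b *v e k"
      using intertwining[of "axis k 1"] by (simp add: e_def linear_scale[OF lin])
    then show ?thesis
      by (simp add: vec_eq_iff matrix_vector_mult_diag_mat)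
  qed
  have "e k \<noteq> 0" for k
    using inj linear_0[OF lin] unfolding e_def by (metis axis_eq_0_iff injD zero_neq_one)
  then have "\<forall>k. \<exists>j. e k $ j \<noteq> 0"
    by (simp add: vec_eq_iff)
  then obtain \<sigma> where \<sigma>: "\<And>k. e k $ \<sigma> k \<noteq> 0"
    by metis
  have b: "b j = a k" if "e k $ j \<noteq> 0" for k j
    using eigen[of k j] that by simp
  have "inj \<sigma>"
    using a b[OF \<sigma>] by (metis injD injI)
  then have "surj \<sigma>"
    using finite_UNIV_inj_surj[of \<sigma>] by simp
  then have \<sigma>_perm: "\<sigma> permutes UNIV"
    using \<open>inj \<sigma>\<close> by (intro bij_imp_permutes) (simp_all add: bij_def)
  define c where "c k = e k $ \<sigma> k" for k
  have support: "e k $ j = (if j = \<sigma> k then c k else 0)" for k j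
  proof (cases "e k $ j = 0")
    case False
    obtain k' where "j = \<sigma> k'"
      using surjD[OF \<open>surj \<sigma>\<close>] by blast
    then show ?thesis
      using a b[OF False] b[OF \<sigma>[of k']] c_def by (metis injD)
  qed (auto simp: c_def)
  have "matrix f $ i $ j = (Pmat \<sigma> ** diag_mat c) $ i $ j" for i j
    using support[of j i] permutes_inv_eq[OF \<sigma>_perm, of i j]
    by (auto simp: matrix_def e_def monomial_entry)
  then have "f x = (Pmat \<sigma> ** diag_mat c) *v x" for x
    using matrix_vector_mul(2)[OF lin] by (metis vec_eq_iff)
  then show ?thesis
    using that[OF \<sigma>_perm] \<sigma> c_def by metis
qed

section \<open>Continuous additive maps and smooth maps\<close>

lemma additive_continuous_imp_linear:
  fixes f :: "'a::real_normed_vector \<Rightarrow> 'b::real_normed_vector"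
  assumes add: "Modules.additive f" and cont: "continuous_on UNIV f"
  shows "linear f"
proof -
  have nat: "f (real n *\<^sub>R x) = real n *\<^sub>R f x" for n x
    using additive.sum[OF add, of "\<lambda>_. x" "{..<n}"] by (simp add: sum_constant_scaleR)
  have int: "f (real_of_int i *\<^sub>R x) = real_of_int i *\<^sub>R f x" for i x
  proof (cases i rule: int_cases)
    case (neg n)
    then show ?thesis
      using nat[of "Suc n" x] additive.minus[OF add] by (metis of_int_minus of_int_of_nat_eq scaleR_minus_left)
  qed (simp add: nat)
  have rat: "f (q *\<^sub>R x) = q *\<^sub>R f x" if q_rat: "q \<in> \<rat>" for q x
  proof -
    obtain i n where q: "q = real_of_int i / real n" and n: "0 < n"
      using q_rat[unfolded Rats_eq_int_div_nat] by auto
    have "real n *\<^sub>R f (q *\<^sub>R x) = f (real_of_int i *\<^sub>R x)"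
      using nat[of n "q *\<^sub>R x"] n q by simp
    also have "\<dots> = real n *\<^sub>R (q *\<^sub>R f x)"
      using int n q by simp
    finally show ?thesis
      using n by (simp only: scaleR_cancel_left) simp
  qed
  have "f (r *\<^sub>R x) = r *\<^sub>R f x" for r x
  proof -
    have "continuous_on (closure \<rat>) (\<lambda>r. f (r *\<^sub>R x) - r *\<^sub>R f x)"
      by (intro continuous_intros continuous_on_compose2[OF cont]) auto
    from continuous_constant_on_closure[OF this, of 0 r] show ?thesis
      using rat Rats_closure_real by auto
  qed
  then show ?thesis
    using additive.add[OF add] by (intro linearI) simp_all
qed

lemma smooth_has_derivative:
  "smooth f \<Longrightarrow> (iter_dd vs f has_derivative frechet_derivative (iter_dd vs f) (at x)) (at x)"
  unfolding smooth_def using frechet_derivative_works by blast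

lemma smooth_imp_continuous_on: "smooth f \<Longrightarrow> continuous_on S f"
  unfolding smooth_def
  by (metis differentiable_at_imp_differentiable_on differentiable_imp_continuous_on iter_dd.simps(1))

lemma iter_dd_compose_left:
  assumes f: "smooth f" and K: "bounded_linear K"
  shows "iter_dd vs (\<lambda>x. K (f x)) = (\<lambda>x. K (iter_dd vs f x))"
proof (induction vs)
  case (Cons v vs)
  have "frechet_derivative (\<lambda>y. K (iter_dd vs f y)) (at x)
      = (\<lambda>h. K (frechet_derivative (iter_dd vs f) (at x) h))" for x
    using bounded_linear.has_derivative[OF K smooth_has_derivative[OF f]]
    by (simp add: frechet_derivative_at[symmetric])
  with Cons show ?case by simp
qed simp

lemma smooth_compose_left:
  assumes f: "smooth f" and K: "bounded_linear K"
  shows "smooth (\<lambda>x. K (f x))"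
  unfolding smooth_def iter_dd_compose_left[OF assms]
  using bounded_linear.has_derivative[OF K smooth_has_derivative[OF f]] differentiableI by blast

lemma iter_dd_compose_right:
  assumes f: "smooth f" and M: "bounded_linear M"
  shows "iter_dd vs (\<lambda>x. f (M x)) = (\<lambda>x. iter_dd (map M vs) f (M x))"
proof (induction vs)
  case (Cons v vs)
  have "frechet_derivative (\<lambda>y. iter_dd (map M vs) f (M y)) (at x)
      = (\<lambda>h. frechet_derivative (iter_dd (map M vs) f) (at (M x)) (M h))" for x
    using has_derivative_compose[OF bounded_linear_imp_has_derivative[OF M] smooth_has_derivative[OF f]]
    by (simp add: frechet_derivative_at[symmetric])
  with Cons show ?case by simp
qed simp

lemma smooth_compose_right:
  assumes f: "smooth f" and M: "bounded_linear M"
  shows "smooth (\<lambda>x. f (M x))"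
  unfolding smooth_def iter_dd_compose_right[OF assms]
  using has_derivative_compose[OF bounded_linear_imp_has_derivative[OF M] smooth_has_derivative[OF f]]
    differentiableI by blast

lemma iter_dd_add:
  assumes f: "smooth f" and g: "smooth g"
  shows "iter_dd vs (\<lambda>x. f x + g x) = (\<lambda>x. iter_dd vs f x + iter_dd vs g x)"
proof (induction vs)
  case (Cons v vs)
  have "frechet_derivative (\<lambda>y. iter_dd vs f y + iter_dd vs g y) (at x)
      = (\<lambda>h. frechet_derivative (iter_dd vs f) (at x) h + frechet_derivative (iter_dd vs g) (at x) h)" for x
    using has_derivative_add[OF smooth_has_derivative[OF f] smooth_has_derivative[OF g]]
    by (simp add: frechet_derivative_at[symmetric])
  with Cons show ?case by simp
qed simp

lemma smooth_add:
  assumes f: "smooth f" and g: "smooth g"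
  shows "smooth (\<lambda>x. f x + g x)"
  unfolding smooth_def iter_dd_add[OF assms]
  using has_derivative_add[OF smooth_has_derivative[OF f] smooth_has_derivative[OF g]]
    differentiableI by blast

lemma smooth_bounded_linear:
  assumes L: "bounded_linear L"
  shows "smooth L"
proof -
  have iter: "iter_dd vs L = L \<or> (\<exists>c. iter_dd vs L = (\<lambda>x. c))" for vs
  proof (induction vs)
    case (Cons v vs)
    have "frechet_derivative L (at x) = L" for x
      using frechet_derivative_at[OF bounded_linear_imp_has_derivative[OF L]] by simp
    with Cons show ?case by auto
  qed simp
  show ?thesis
    unfolding smooth_def
  proof (intro allI)
    fix vs x
    show "iter_dd vs L differentiable at x"
      using iter[of vs] bounded_linear_imp_differentiable[OF L] by auto
  qed
qed

lemma smooth_triangular_inverse: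
  fixes f :: "(real^'n::finite) \<times> (real^'m::finite) \<Rightarrow> (real^'n) \<times> (real^'m)"
    and A :: "real^'n^'n" and B :: "real^'m^'m"
  assumes "smooth f"
  shows "smooth (\<lambda>z. (A *v (fst z - fst (f (0, B *v snd z))), B *v snd z))"
proof -
  have L: "bounded_linear (\<lambda>z. (A *v fst z, B *v snd z))"
    and K: "bounded_linear (\<lambda>p. (- (A *v fst p), 0 :: real^'m))"
    and M: "bounded_linear (\<lambda>z. (0 :: real^'n, B *v snd z))"
    by (intro bounded_linear_Pair bounded_linear_minus bounded_linear_zero bounded_linear_fst
        bounded_linear_snd bounded_linear_compose[OF matrix_vector_mul_bounded_linear])+
  have "smooth (\<lambda>z. (A *v fst z, B *v snd z) + (- (A *v fst (f (0, B *v snd z))), 0 :: real^'m))"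
    by (rule smooth_add[OF smooth_bounded_linear[OF L]
          smooth_compose_left[OF smooth_compose_right[OF assms M] K]])
  moreover have "(\<lambda>z. (A *v fst z, B *v snd z) + (- (A *v fst (f (0, B *v snd z))), 0 :: real^'m))
      = (\<lambda>z. (A *v (fst z - fst (f (0, B *v snd z))), B *v snd z))"
    by (simp add: fun_eq_iff matrix_vector_mult_diff_distrib)
  ultimately show ?thesis
    by simp
qed

section \<open>Endomorphisms of the semidirect product\<close>

definition eta :: "('m::finite \<Rightarrow> 'n::finite \<Rightarrow> real) \<Rightarrow> real^'m \<Rightarrow> real^'n \<Rightarrow> real^'n" where
  "eta d t x = mexp (tDelta d t) *v x"

lemma gmul_eq: "gmul d g h = (fst g + eta d (snd g) (fst h), snd g + snd h)"
  by (simp add: gmul_def eta_def)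

lemma tDelta_eq_diag_mat: "tDelta d t = diag_mat (\<lambda>k. (Omega d *v t) $ k)"
  by (auto simp: tDelta_def Delta_def diag_mat_def Omega_def matrix_vector_mult_def vec_eq_iff
      mult.commute)

lemma eta_eq_diag_mat: "eta d t x = diag_mat (\<lambda>k. exp ((Omega d *v t) $ k)) *v x"
  by (simp add: eta_def tDelta_eq_diag_mat mexp_diag_mat)

lemma eta_nth: "eta d t x $ k = exp ((Omega d *v t) $ k) * x $ k"
  by (simp add: eta_eq_diag_mat matrix_vector_mult_diag_mat)

lemma eta_zero [simp]: "eta d t 0 = 0"
  by (simp add: vec_eq_iff eta_nth)

lemma eta_at_zero [simp]: "eta d 0 x = x"
  by (simp add: vec_eq_iff eta_nth)

lemma Omega_mult_axis_nth: "(Omega d *v axis i r) $ k = d i k * r"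
  by (simp add: Omega_def matrix_vector_mult_def axis_def mult_if_zero)

lemma inj_Omega:
  assumes indep: "\<forall>c::'m \<Rightarrow> real. (\<Sum>i\<in>UNIV. c i *\<^sub>R Delta d i) = 0 \<longrightarrow> (\<forall>i. c i = 0)"
  shows "inj ((*v) (Omega d :: real^'m::finite^'n::finite))"
proof -
  have "z = 0" if "Omega d *v z = 0" for z :: "real^'m"
  proof -
    have "(\<Sum>i\<in>UNIV. z $ i *\<^sub>R Delta d i) = diag_mat (\<lambda>k. (Omega d *v z) $ k)"
      by (simp add: tDelta_eq_diag_mat[symmetric] tDelta_def)
    also have "\<dots> = 0"
      using that by (simp add: diag_mat_def vec_eq_iff)
    finally show "z = 0"
      using indep by (simp add: vec_eq_iff)
  qed
  then show ?thesis
    by (simp add: matrix_left_invertible_ker matrix_left_invertible_injective[symmetric])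
qed

lemma exprel_series_tDelta:
  "(\<Sum>k. (1 / fact (k + 1)) *\<^sub>R matpow (tDelta d t) k)
     = diag_mat (\<lambda>j. exprel ((Omega d *v t) $ j))"
  unfolding tDelta_eq_diag_mat matpow_diag_mat scaleR_diag_mat
  by (rule sums_unique[symmetric], rule sums_diag_mat, rule exprel_sums)

locale semidirect_hom =
  fixes d :: "'m::finite \<Rightarrow> 'n::finite \<Rightarrow> real"
    and \<phi> :: "(real^'n) \<times> (real^'m) \<Rightarrow> (real^'n) \<times> (real^'m)"
  assumes hom: "\<And>g h. \<phi> (gmul d g h) = gmul d (\<phi> g) (\<phi> h)"
    and nonsing: "\<And>i k. d i k \<noteq> 0"
begin

lemma snd_phi_normal: "snd (\<phi> (x, 0)) = 0"
proof -
  define \<sigma> where "\<sigma> g = snd (\<phi> g)" for g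
  have \<sigma>_mult: "\<sigma> (gmul d g h) = \<sigma> g + \<sigma> h" for g h
    using hom[of g h] by (simp add: \<sigma>_def gmul_eq)
  have \<sigma>_unit: "\<sigma> (0, 0) = 0"
    using \<sigma>_mult[of "(0, 0)" "(0, 0)"] by (simp add: gmul_eq)
  have \<sigma>_translation_inverse: "\<sigma> (0, t) + \<sigma> (0, - t) = 0" for t
    using \<sigma>_mult[of "(0, t)" "(0, - t)"] by (simp add: gmul_eq \<sigma>_unit)
  have \<sigma>_normal_inverse: "\<sigma> (y, 0) + \<sigma> (- y, 0) = 0" for y
    using \<sigma>_mult[of "(y, 0)" "(- y, 0)"] by (simp add: gmul_eq \<sigma>_unit)
  fix i :: 'm
  define t where "t = axis i (1::real)"
  define y where "y = (\<chi> k. x $ k / (exp (d i k) - 1))"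
  have "exp (d i k) * (x $ k / (exp (d i k) - 1)) - x $ k / (exp (d i k) - 1) = x $ k" for k
    using nonsing[of i k] by (simp add: divide_simps) (simp add: algebra_simps)
  then have "eta d t y - y = x"
    by (simp add: vec_eq_iff eta_nth t_def y_def Omega_mult_axis_nth)
  then have "(x, 0) = gmul d (gmul d (gmul d (0, t) (y, 0)) (0, - t)) (- y, 0)"
    by (simp add: gmul_eq)
  then have "\<sigma> (x, 0) = (\<sigma> (0, t) + \<sigma> (0, - t)) + (\<sigma> (y, 0) + \<sigma> (- y, 0))"
    by (simp add: \<sigma>_mult ac_simps)
  also have "\<dots> = 0"
    by (simp add: \<sigma>_translation_inverse \<sigma>_normal_inverse)
  finally show ?thesis
    by (simp add: \<sigma>_def)
qed

lemma phi_decomp: "\<phi> (x, t) = (fst (\<phi> (x, 0)) + fst (\<phi> (0, t)), snd (\<phi> (0, t)))"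
  using hom[of "(x, 0)" "(0, t)"] snd_phi_normal[of x] by (simp add: gmul_eq)

lemma alpha_additive: "Modules.additive (\<lambda>x. fst (\<phi> (x, 0)))"
proof
  fix x y
  show "fst (\<phi> (x + y, 0)) = fst (\<phi> (x, 0)) + fst (\<phi> (y, 0))"
    using hom[of "(x, 0)" "(y, 0)"] snd_phi_normal[of x] by (simp add: gmul_eq)
qed

lemma alpha_eta: "fst (\<phi> (eta d t x, 0)) = eta d (snd (\<phi> (0, t))) (fst (\<phi> (x, 0)))"
  using hom[of "(0, t)" "(x, 0)"] phi_decomp[of "eta d t x" t] phi_decomp[of x 0] snd_phi_normal[of x]
  by (simp add: gmul_eq)

lemma beta_cocycle: "fst (\<phi> (0, t + s)) = fst (\<phi> (0, t)) + eta d (snd (\<phi> (0, t))) (fst (\<phi> (0, s)))"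
  using hom[of "(0, t)" "(0, s)"] by (simp add: gmul_eq)

lemma beta_cocycle_nth:
  "fst (\<phi> (0, t + s)) $ k = fst (\<phi> (0, t)) $ k + exp ((Omega d *v snd (\<phi> (0, t))) $ k) * fst (\<phi> (0, s)) $ k"
  unfolding beta_cocycle by (simp only: vector_add_component eta_nth)

lemma linear_alpha:
  assumes "smooth \<phi>"
  shows "linear (\<lambda>x. fst (\<phi> (x, 0)))"
proof (rule additive_continuous_imp_linear[OF alpha_additive])
  show "continuous_on UNIV (\<lambda>x. fst (\<phi> (x, 0)))"
    by (intro continuous_intros continuous_on_compose2[OF smooth_imp_continuous_on[OF assms]]) auto
qed

lemma inj_alpha:
  assumes "inj \<phi>"
  shows "inj (\<lambda>x. fst (\<phi> (x, 0)))"
proof (rule injI)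
  fix x y
  assume "fst (\<phi> (x, 0)) = fst (\<phi> (y, 0))"
  then have "\<phi> (x, 0) = \<phi> (y, 0)"
    using snd_phi_normal by (simp add: prod_eq_iff)
  then show "x = y"
    using injD[OF assms] by blast
qed

lemma surj_delta:
  assumes "surj \<phi>"
  shows "surj (\<lambda>t. snd (\<phi> (0, t)))"
proof (rule surjI)
  fix s
  have "snd (\<phi> (0, snd q)) = snd (\<phi> q)" for q
    using phi_decomp[of "fst q" "snd q"] by simp
  then show "snd (\<phi> (0, snd (inv \<phi> (0, s)))) = s"
    using surj_f_inv_f[OF assms, of "(0, s)"] by simp
qed

lemma alpha_monomial:
  assumes lin: "linear (\<lambda>x. fst (\<phi> (x, 0)))" and inj: "inj (\<lambda>x. fst (\<phi> (x, 0)))"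
    and distinct: "inj (d i)"
  obtains \<tau> c where "\<tau> permutes UNIV" "\<forall>k. c k \<noteq> 0"
    "\<And>x. fst (\<phi> (x, 0)) = (Pmat \<tau> ** diag_mat c) *v x"
proof -
  define t where "t = axis i (1::real)"
  have "eta d t x = diag_mat (\<lambda>k. exp (d i k)) *v x" for x
    by (simp add: vec_eq_iff eta_nth matrix_vector_mult_diag_mat t_def Omega_mult_axis_nth)
  then have "fst (\<phi> (diag_mat (\<lambda>k. exp (d i k)) *v x, 0))
      = diag_mat (\<lambda>k. exp ((Omega d *v snd (\<phi> (0, t))) $ k)) *v fst (\<phi> (x, 0))" for x
    using alpha_eta[of t x] by (simp add: eta_eq_diag_mat)
  moreover have "inj (\<lambda>k. exp (d i k))"
    using distinct by (simp add: inj_def)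
  ultimately show ?thesis
    using linear_intertwining_diag_monomial[OF lin inj] that by blast
qed

lemma Omega_delta:
  assumes \<tau>: "\<tau> permutes UNIV" and c: "\<forall>k. c k \<noteq> 0"
    and alpha: "\<And>x. fst (\<phi> (x, 0)) = (Pmat \<tau> ** diag_mat c) *v x"
  shows "Omega d *v snd (\<phi> (0, t)) = Pmat \<tau> *v (Omega d *v t)"
proof -
  have "(Omega d *v t) $ k = (Omega d *v snd (\<phi> (0, t))) $ \<tau> k" for k
  proof -
    have "eta d t (axis k 1) = exp ((Omega d *v t) $ k) *\<^sub>R axis k 1"
      by (simp add: vec_eq_iff eta_nth axis_def)
    moreover have "fst (\<phi> (eta d t (axis k 1), 0)) $ \<tau> k
        = eta d (snd (\<phi> (0, t))) (fst (\<phi> (axis k 1, 0))) $ \<tau> k"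
      by (simp add: alpha_eta)
    ultimately have "c k * exp ((Omega d *v t) $ k) = exp ((Omega d *v snd (\<phi> (0, t))) $ \<tau> k) * c k"
      by (simp add: alpha eta_nth monomial_mult_vec_nth permutes_inverses[OF \<tau>] axis_def)
    then show ?thesis
      using c by simp
  qed
  then show ?thesis
    by (metis Pmat_mult_vec_nth permutes_inverses(1)[OF \<tau>] vec_eq_iff)
qed

lemma inj_delta:
  assumes indep: "\<forall>c::'m \<Rightarrow> real. (\<Sum>i\<in>UNIV. c i *\<^sub>R Delta d i) = 0 \<longrightarrow> (\<forall>i. c i = 0)"
    and \<tau>: "\<tau> permutes UNIV" and c: "\<forall>k. c k \<noteq> 0"
    and alpha: "\<And>x. fst (\<phi> (x, 0)) = (Pmat \<tau> ** diag_mat c) *v x"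
  shows "inj (\<lambda>t. snd (\<phi> (0, t)))"
proof (rule injI)
  fix t t'
  assume "snd (\<phi> (0, t)) = snd (\<phi> (0, t'))"
  then have "Pmat \<tau> *v (Omega d *v t) = Pmat \<tau> *v (Omega d *v t')"
    by (simp flip: Omega_delta[OF \<tau> c alpha])
  then show "t = t'"
    using injD[OF inj_Pmat[OF \<tau>]] injD[OF inj_Omega[OF indep]] by blast
qed

lemma delta_eq:
  assumes indep: "\<forall>c::'m \<Rightarrow> real. (\<Sum>i\<in>UNIV. c i *\<^sub>R Delta d i) = 0 \<longrightarrow> (\<forall>i. c i = 0)"
    and \<tau>: "\<tau> permutes UNIV" and c: "\<forall>k. c k \<noteq> 0"
    and alpha: "\<And>x. fst (\<phi> (x, 0)) = (Pmat \<tau> ** diag_mat c) *v x"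
  shows "snd (\<phi> (0, t)) = (matrix_inv (transpose (Omega d) ** Omega d) ** transpose (Omega d)
    ** Pmat \<tau> ** Omega d) *v t"
proof -
  let ?L = "matrix_inv (transpose (Omega d) ** Omega d) ** transpose (Omega d)"
  have "snd (\<phi> (0, t)) = (?L ** Omega d) *v snd (\<phi> (0, t))"
    by (simp add: gram_matrix_left_inverse[OF inj_Omega[OF indep]])
  also have "\<dots> = ?L *v (Pmat \<tau> *v (Omega d *v t))"
    by (simp add: matrix_vector_mul_assoc[symmetric] Omega_delta[OF \<tau> c alpha])
  also have "\<dots> = (?L ** Pmat \<tau> ** Omega d) *v t"
    by (simp add: matrix_vector_mul_assoc matrix_mul_assoc)
  finally show ?thesis .
qed

lemma beta_eq:
  assumes surj: "surj (\<lambda>t. snd (\<phi> (0, t)))" and delta: "\<And>t. snd (\<phi> (0, t)) = N *v t"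
  shows "\<exists>U :: real^'m^'n. \<forall>t. fst (\<phi> (0, t)) =
    (\<Sum>k. (1 / fact (k + 1)) *\<^sub>R matpow (tDelta d (snd (\<phi> (0, t)))) k) *v (U *v t)"
proof -
  define \<beta> where "\<beta> t = fst (\<phi> (0, t))" for t
  define \<mu> where "\<mu> t = Omega d *v snd (\<phi> (0, t))" for t
  have cocycle: "\<beta> (t + t') $ k = \<beta> t $ k + exp (\<mu> t $ k) * \<beta> t' $ k" for t t' k
    unfolding \<beta>_def \<mu>_def by (rule beta_cocycle_nth)
  fix i :: 'm
  obtain s where "axis i 1 = snd (\<phi> (0, s))"
    using surjD[OF surj] by blast
  then have \<mu>_s: "\<mu> s $ k = d i k" for k
    by (simp add: \<mu>_def Omega_mult_axis_nth flip: \<open>axis i 1 = snd (\<phi> (0, s))\<close>)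
  \<comment> \<open>Comparing the cocycle identity for \<open>t + s\<close> and \<open>s + t\<close>, where \<open>\<delta>(s) = e\<^sub>i\<close>.\<close>
  define c where "c k = \<beta> s $ k / (exp (d i k) - 1)" for k
  have beta: "\<beta> t $ k = c k * (exp (\<mu> t $ k) - 1)" for t k
  proof -
    have "\<beta> (t + s) $ k = \<beta> (s + t) $ k"
      by (simp only: add.commute)
    then have "\<beta> t $ k + exp (\<mu> t $ k) * \<beta> s $ k = \<beta> s $ k + exp (\<mu> s $ k) * \<beta> t $ k"
      using cocycle[of t s k] cocycle[of s t k] by linarith
    then have "\<beta> t $ k + exp (\<mu> t $ k) * \<beta> s $ k = \<beta> s $ k + exp (d i k) * \<beta> t $ k"
      by (simp only: \<mu>_s)
    then have "\<beta> t $ k * (exp (d i k) - 1) = \<beta> s $ k * (exp (\<mu> t $ k) - 1)"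
      by (simp add: algebra_simps)
    then show ?thesis
      using nonsing[of i k] by (simp add: c_def field_simps)
  qed
  define U where "U = diag_mat c ** Omega d ** N"
  have "(U *v t) $ k = c k * \<mu> t $ k" for t k
    by (simp add: U_def \<mu>_def delta matrix_vector_mul_assoc[symmetric] matrix_vector_mult_diag_mat)
  then have "\<beta> t = diag_mat (\<lambda>j. exprel (\<mu> t $ j)) *v (U *v t)" for t
    by (simp add: vec_eq_iff matrix_vector_mult_diag_mat beta mult_exprel[symmetric])
  then show ?thesis
    unfolding exprel_series_tDelta \<beta>_def \<mu>_def by blast
qed

lemma normal_form_if_automorphism:
  assumes indep: "\<forall>c::'m \<Rightarrow> real. (\<Sum>i\<in>UNIV. c i *\<^sub>R Delta d i) = 0 \<longrightarrow> (\<forall>i. c i = 0)"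
    and distinct: "inj (d i)" and smooth: "smooth \<phi>" and bij: "bij \<phi>"
  shows "(\<exists>\<tau> c. \<tau> permutes UNIV \<and> (\<forall>k. c k \<noteq> 0) \<and>
            (\<lambda>x. fst (\<phi> (x, 0))) = (\<lambda>x. (Pmat \<tau> ** diag_mat c) *v x) \<and>
            (\<lambda>t. snd (\<phi> (0, t))) = (\<lambda>t. (matrix_inv (transpose (Omega d) ** Omega d)
              ** transpose (Omega d) ** Pmat \<tau> ** Omega d) *v t)) \<and>
    (\<exists>U :: real^'m^'n. \<forall>t. fst (\<phi> (0, t)) =
      (\<Sum>k. (1 / fact (k + 1)) *\<^sub>R matpow (tDelta d (snd (\<phi> (0, t)))) k) *v (U *v t))"
proof -
  obtain \<tau> c where \<tau>: "\<tau> permutes UNIV" and c: "\<forall>k. c k \<noteq> 0"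
    and alpha: "\<And>x. fst (\<phi> (x, 0)) = (Pmat \<tau> ** diag_mat c) *v x"
    using alpha_monomial[OF linear_alpha[OF smooth] inj_alpha[OF bij_is_inj[OF bij]] distinct]
    by blast
  note delta = delta_eq[OF indep \<tau> c alpha]
  show ?thesis
    using \<tau> c alpha delta beta_eq[OF surj_delta[OF bij_is_surj[OF bij]] delta]
    by (auto simp: fun_eq_iff)
qed

lemma automorphism_if_normal_form:
  assumes indep: "\<forall>c::'m \<Rightarrow> real. (\<Sum>i\<in>UNIV. c i *\<^sub>R Delta d i) = 0 \<longrightarrow> (\<forall>i. c i = 0)"
    and smooth: "smooth \<phi>" and \<tau>: "\<tau> permutes UNIV" and c: "\<forall>k. c k \<noteq> 0"
    and alpha: "(\<lambda>x. fst (\<phi> (x, 0))) = (\<lambda>x. (Pmat \<tau> ** diag_mat c) *v x)"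
    and delta: "(\<lambda>t. snd (\<phi> (0, t))) = (\<lambda>t. (matrix_inv (transpose (Omega d) ** Omega d)
      ** transpose (Omega d) ** Pmat \<tau> ** Omega d) *v t)"
  shows "lie_auto d \<phi>"
proof -
  define A where "A = Pmat \<tau> ** diag_mat c"
  define N where "N = matrix_inv (transpose (Omega d) ** Omega d) ** transpose (Omega d)
    ** Pmat \<tau> ** Omega d"
  define \<beta> where "\<beta> t = fst (\<phi> (0, t))" for t
  have phi: "\<phi> p = (A *v fst p + \<beta> (snd p), N *v snd p)" for p
    using phi_decomp[of "fst p" "snd p"] fun_cong[OF alpha] fun_cong[OF delta]
    by (simp add: A_def N_def \<beta>_def)
  have "invertible A"
    using inj_monomial[OF \<tau> c] by (simp add: A_def invertible_iff_inj)
  have "inj ((*v) N)"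
    using inj_delta[OF indep \<tau> c fun_cong[OF alpha]] by (simp add: N_def fun_cong[OF delta])
  then have "invertible N"
    by (simp add: invertible_iff_inj)
  define \<psi> where "\<psi> z = (matrix_inv A *v (fst z - \<beta> (matrix_inv N *v snd z)), matrix_inv N *v snd z)"
    for z
  have right_inverse: "\<phi> (\<psi> z) = z" for z
    using \<open>invertible A\<close> \<open>invertible N\<close>
    by (simp add: phi \<psi>_def matrix_vector_mul_assoc matrix_inv_mult prod_eq_iff)
  have left_inverse: "\<psi> (\<phi> p) = p" for p
    using \<open>invertible A\<close> \<open>invertible N\<close>
    by (simp add: phi \<psi>_def matrix_vector_mul_assoc matrix_inv_mult prod_eq_iff)
  have "bij \<phi>"
    using o_bij[where f = \<phi> and g = \<psi>] left_inverse right_inverse by (simp add: fun_eq_iff)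
  have "inv \<phi> = \<psi>"
    using left_inverse right_inverse by (rule inv_equality)
  have "\<psi> (gmul d g h) = gmul d (\<psi> g) (\<psi> h)" for g h
  proof -
    have "\<psi> (gmul d g h) = \<psi> (\<phi> (gmul d (\<psi> g) (\<psi> h)))"
      by (simp add: hom right_inverse)
    then show ?thesis
      by (simp add: left_inverse)
  qed
  moreover have "smooth \<psi>"
    unfolding \<psi>_def \<beta>_def by (rule smooth_triangular_inverse[OF smooth])
  ultimately show ?thesis
    unfolding lie_auto_def lie_endo_def \<open>inv \<phi> = \<psi>\<close> using smooth hom \<open>bij \<phi>\<close> by blast
qed

end

theorem mainTheorem2:
  fixes d :: "'m::finite \<Rightarrow> 'n::finite \<Rightarrow> real"
    and \<phi> :: "(real^'n) \<times> (real^'m) \<Rightarrow> (real^'n) \<times> (real^'m)"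
  assumes mn: "CARD('m) \<le> CARD('n)"
    and indep: "\<forall>c::'m \<Rightarrow> real. (\<Sum>i\<in>UNIV. c i *\<^sub>R Delta d i) = 0 \<longrightarrow> (\<forall>i. c i = 0)"
    and nonsing: "\<forall>i k. d i k \<noteq> 0"
    and traceless: "\<forall>i. (\<Sum>k\<in>UNIV. d i k) = 0"
    and distinct: "\<forall>i. inj (d i)"
    and endo: "lie_endo d \<phi>"
  shows "lie_auto d \<phi> \<longleftrightarrow>
    (let \<alpha> = (\<lambda>x. fst (\<phi> (x, 0))); \<beta> = (\<lambda>t. fst (\<phi> (0, t)));
         \<gamma> = (\<lambda>x. snd (\<phi> (x, 0))); \<delta> = (\<lambda>t. snd (\<phi> (0, t)))
     in (\<exists>\<tau> c. \<tau> permutes (UNIV :: 'n set) \<and> (\<forall>k. c k \<noteq> 0) \<and>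
            \<alpha> = (\<lambda>x. (Pmat \<tau> ** diag_mat c) *v x) \<and>
            \<delta> = (\<lambda>t. (matrix_inv (transpose (Omega d) ** Omega d) ** transpose (Omega d)
                        ** Pmat \<tau> ** Omega d) *v t)) \<and>
        \<gamma> = (\<lambda>x. 0) \<and>
        (\<exists>U :: real^'m^'n. \<forall>t. \<beta> t =
            (\<Sum>k. (1 / fact (k + 1)) *\<^sub>R matpow (tDelta d (\<delta> t)) k) *v (U *v t)))"
proof -
  have smooth: "smooth \<phi>" and hom: "\<And>g h. \<phi> (gmul d g h) = gmul d (\<phi> g) (\<phi> h)"
    using endo unfolding lie_endo_def by blast+
  interpret semidirect_hom d \<phi>
    by unfold_locales (simp_all add: hom nonsing)
  have gamma: "(\<lambda>x. snd (\<phi> (x, 0))) = (\<lambda>x. 0)"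
    using snd_phi_normal by (simp add: fun_eq_iff)
  have "lie_auto d \<phi> \<Longrightarrow> bij \<phi>"
    by (simp add: lie_auto_def)
  then show ?thesis
    unfolding Let_def
    using normal_form_if_automorphism[OF indep distinct[rule_format] smooth]
      automorphism_if_normal_form[OF indep smooth] gamma
    by blast
qed

end
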